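(* Let $s_B(\theta|\mathcal{X})\in\mathbb{R}^d$ be a fixed (learned) approximation of the posterior score $\nabla_\theta\log p(\theta|\mathcal{X})$ with $\mathbb{E}\|s_B(\theta|\mathcal{X})\|_2^2<\infty$ and $\mathbb{E}\|\nabla_\theta\log p(\theta|\mathcal{X})\|_2^2<\infty$, and assume $F_B\neq 0$. Let $\mathcal{L}_B=\mathbb{E}_{\theta,\mathcal{X}}\|s_B(\theta|\mathcal{X})-\nabla_\theta\log p(\theta|\mathcal{X})\|_2^2$, $\mathrm{sRE}_B=\mathcal{L}_B/\mathrm{Tr}(F_B)$ and $d_B=\mathrm{intdim}(F_B)$. If $d_B\cdot\mathrm{sRE}_B\le 0.16$, then $$\frac{\|\bar F_B-F_B\|_2}{\|F_B\|_2}\le 2.4\sqrt{d_B\cdot\mathrm{sRE}_B}.$$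
   Context: Setup: $\theta\in\Theta\subseteq\mathbb{R}^d$ is a random parameter with prior density $p(\theta)$; given $\theta$, $\mathcal{X}=\{X_i\}_{i=1}^{n}$ are i.i.d. observations with density $p(x|\theta)$; $p(\theta|\mathcal{X})$ is the posterior. The Bayesian Fisher information matrix is $F_B=\mathbb{E}_{\theta,\mathcal{X}}[\nabla_\theta\log p(\theta|\mathcal{X})\nabla_\theta\log p(\theta|\mathcal{X})^T]$, and the learned Bayesian FIM is $\bar F_B=\mathbb{E}_{\theta,\mathcal{X}}[s_B(\theta|\mathcal{X})s_B(\theta|\mathcal{X})^T]$. For a nonzero positive semidefinite matrix $A$, $\mathrm{intdim}(A)=\mathrm{Tr}(A)/\|A\|_2$ (intrinsic dimension); $\|\cdot\|_2$ is the spectral norm. *)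

theory Defs
  imports "HOL-Analysis.Analysis" "HOL-Probability.Probability"
begin

definition mat_trace :: "real^'n^'n \<Rightarrow> real" where
  "mat_trace A = (\<Sum>i\<in>UNIV. A $ i $ i)"

definition spec_norm :: "real^'n^'m \<Rightarrow> real" where
  "spec_norm A = onorm (\<lambda>x. A *v x)"

definition intdim :: "real^'n^'n \<Rightarrow> real" where
  "intdim A = mat_trace A / spec_norm A"

text \<open>Second moment matrix E[v v^T] of a random vector v under M
  (F_B when v is the posterior score, bar F_B when v is the learned score).\<close>
definition second_moment :: "'w measure \<Rightarrow> ('w \<Rightarrow> real^'n) \<Rightarrow> real^'n^'n" where
  "second_moment M v = (\<chi> i j. \<integral>\<omega>. v \<omega> $ i * v \<omega> $ j \<partial>M)"

end

theory Submission
  imports Defs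
begin

text \<open>Write the learned score as \<open>sB = score + e\<close>. Then \<open>x\<^sup>T (bar F_B - F_B) y\<close> is
  \<open>E[(x\<bullet>e)(y\<bullet>score)] + E[(x\<bullet>score)(y\<bullet>e)] + E[(x\<bullet>e)(y\<bullet>e)]\<close>, and Cauchy-Schwarz
  with \<open>E (x\<bullet>e)\<^sup>2 \<le> |x|\<^sup>2 L_B\<close> and \<open>E (x\<bullet>score)\<^sup>2 \<le> |x|\<^sup>2 \<parallel>F_B\<parallel>\<close> bounds the spectral norm of
  the difference by \<open>2 sqrt (L_B \<parallel>F_B\<parallel>) + L_B\<close>. Relative to \<open>\<parallel>F_B\<parallel>\<close> this is \<open>2r + r\<^sup>2\<close>
  with \<open>r\<^sup>2 = L_B / \<parallel>F_B\<parallel> = d_B sRE_B\<close>, and \<open>r \<le> 0.4\<close> gives \<open>2r + r\<^sup>2 \<le> 2.4 r\<close>.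
  Nothing uses that the measure is a probability measure.\<close>

lemma sq_le_mult_if_quadratic_nonneg:
  fixes A B C :: real
  assumes nonneg: "\<And>t. 0 \<le> A - 2 * t * C + t\<^sup>2 * B" and "0 \<le> B"
  shows "C\<^sup>2 \<le> A * B"
proof (cases "B = 0")
  case True
  have "C = 0"
  proof (rule ccontr)
    assume "C \<noteq> 0"
    have "0 \<le> A - 2 * ((A + 1) / (2 * C)) * C" using nonneg[of "(A + 1) / (2 * C)"] True by simp
    then show False using \<open>C \<noteq> 0\<close> by (simp add: field_simps)
  qed
  then show ?thesis using True by simp
next
  case False
  with \<open>0 \<le> B\<close> have "B > 0" by simp
  have "0 \<le> A - 2 * (C / B) * C + (C / B)\<^sup>2 * B" by (rule nonneg)
  also have "\<dots> = A - C\<^sup>2 / B" using \<open>B > 0\<close> by (simp add: field_simps power2_eq_square)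
  finally show ?thesis using \<open>B > 0\<close> by (simp add: field_simps)
qed

lemma integrable_mult_if_square_integrable:
  fixes a b :: "'w \<Rightarrow> real"
  assumes "a \<in> borel_measurable M" "b \<in> borel_measurable M"
    and "integrable M (\<lambda>x. (a x)\<^sup>2)" "integrable M (\<lambda>x. (b x)\<^sup>2)"
  shows "integrable M (\<lambda>x. a x * b x)"
proof (rule Bochner_Integration.integrable_bound[where f = "\<lambda>x. (a x)\<^sup>2 + (b x)\<^sup>2"])
  show "integrable M (\<lambda>x. (a x)\<^sup>2 + (b x)\<^sup>2)" using assms by simp
  show "(\<lambda>x. a x * b x) \<in> borel_measurable M" using assms by simp
  have "\<bar>a x * b x\<bar> \<le> (a x)\<^sup>2 + (b x)\<^sup>2" for x
  proof -
    have "2 * (\<bar>a x\<bar> * \<bar>b x\<bar>) \<le> (a x)\<^sup>2 + (b x)\<^sup>2"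
      using sum_squares_ge_zero[of "\<bar>a x\<bar> - \<bar>b x\<bar>" 0]
      by (simp add: power2_eq_square algebra_simps)
    moreover have "0 \<le> \<bar>a x\<bar> * \<bar>b x\<bar>" by simp
    ultimately have "\<bar>a x\<bar> * \<bar>b x\<bar> \<le> (a x)\<^sup>2 + (b x)\<^sup>2" by linarith
    then show ?thesis by (simp add: abs_mult)
  qed
  then show "AE x in M. norm (a x * b x) \<le> norm ((a x)\<^sup>2 + (b x)\<^sup>2)" by simp
qed

lemma abs_integral_mult_le_sqrt:
  fixes a b :: "'w \<Rightarrow> real"
  assumes "a \<in> borel_measurable M" "b \<in> borel_measurable M"
    and "integrable M (\<lambda>x. (a x)\<^sup>2)" "integrable M (\<lambda>x. (b x)\<^sup>2)"
  shows "\<bar>\<integral>x. a x * b x \<partial>M\<bar> \<le> sqrt (\<integral>x. (a x)\<^sup>2 \<partial>M) * sqrt (\<integral>x. (b x)\<^sup>2 \<partial>M)"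
proof -
  have ab: "integrable M (\<lambda>x. a x * b x)"
    using integrable_mult_if_square_integrable[OF assms] .
  have "(\<integral>x. a x * b x \<partial>M)\<^sup>2 \<le> (\<integral>x. (a x)\<^sup>2 \<partial>M) * (\<integral>x. (b x)\<^sup>2 \<partial>M)"
  proof (rule sq_le_mult_if_quadratic_nonneg)
    fix t
    have "0 \<le> (\<integral>x. (a x - t * b x)\<^sup>2 \<partial>M)" by simp
    also have "\<dots> = (\<integral>x. (a x)\<^sup>2 - 2 * t * (a x * b x) + t\<^sup>2 * (b x)\<^sup>2 \<partial>M)"
      by (rule Bochner_Integration.integral_cong) (auto simp: power2_eq_square algebra_simps)
    also have "\<dots> = (\<integral>x. (a x)\<^sup>2 \<partial>M) - 2 * t * (\<integral>x. a x * b x \<partial>M) + t\<^sup>2 * (\<integral>x. (b x)\<^sup>2 \<partial>M)"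
      using assms ab by simp
    finally show "0 \<le> (\<integral>x. (a x)\<^sup>2 \<partial>M) - 2 * t * (\<integral>x. a x * b x \<partial>M) + t\<^sup>2 * (\<integral>x. (b x)\<^sup>2 \<partial>M)" .
  qed simp
  then have "sqrt ((\<integral>x. a x * b x \<partial>M)\<^sup>2) \<le> sqrt ((\<integral>x. (a x)\<^sup>2 \<partial>M) * (\<integral>x. (b x)\<^sup>2 \<partial>M))"
    by (rule real_sqrt_le_mono)
  then show ?thesis by (simp add: real_sqrt_mult)
qed

lemma square_integrable_diff:
  fixes a b :: "'w \<Rightarrow> 'a::{real_normed_vector, second_countable_topology}"
  assumes "a \<in> borel_measurable M" "b \<in> borel_measurable M"
    and "integrable M (\<lambda>w. (norm (a w))\<^sup>2)" "integrable M (\<lambda>w. (norm (b w))\<^sup>2)"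
  shows "integrable M (\<lambda>w. (norm (a w - b w))\<^sup>2)"
proof (rule Bochner_Integration.integrable_bound[where f = "\<lambda>w. 2 * (norm (a w))\<^sup>2 + 2 * (norm (b w))\<^sup>2"])
  show "integrable M (\<lambda>w. 2 * (norm (a w))\<^sup>2 + 2 * (norm (b w))\<^sup>2)" using assms by simp
  show "(\<lambda>w. (norm (a w - b w))\<^sup>2) \<in> borel_measurable M" using assms by simp
  have "(norm (a w - b w))\<^sup>2 \<le> 2 * (norm (a w))\<^sup>2 + 2 * (norm (b w))\<^sup>2" for w
  proof -
    have "(norm (a w - b w))\<^sup>2 \<le> (norm (a w) + norm (b w))\<^sup>2"
      by (rule power_mono[OF norm_triangle_ineq4]) simp
    also have "\<dots> \<le> 2 * (norm (a w))\<^sup>2 + 2 * (norm (b w))\<^sup>2"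
      using sum_squares_ge_zero[of "norm (a w) - norm (b w)" 0]
      by (simp add: power2_eq_square algebra_simps)
    finally show ?thesis .
  qed
  then show "AE w in M. norm ((norm (a w - b w))\<^sup>2) \<le> norm (2 * (norm (a w))\<^sup>2 + 2 * (norm (b w))\<^sup>2)"
    by simp
qed

lemma inner_square_le:
  fixes x y :: "'a::real_inner"
  shows "(x \<bullet> y)\<^sup>2 \<le> (norm x)\<^sup>2 * (norm y)\<^sup>2"
proof -
  have "\<bar>x \<bullet> y\<bar>\<^sup>2 \<le> (norm x * norm y)\<^sup>2"
    by (rule power_mono[OF Cauchy_Schwarz_ineq2]) simp
  then show ?thesis by (simp add: power_mult_distrib)
qed

lemma square_integrable_inner:
  fixes v :: "'w \<Rightarrow> 'a::{real_inner, second_countable_topology}"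
  assumes "v \<in> borel_measurable M" "integrable M (\<lambda>w. (norm (v w))\<^sup>2)"
  shows "integrable M (\<lambda>w. (x \<bullet> v w)\<^sup>2)"
proof (rule Bochner_Integration.integrable_bound[where f = "\<lambda>w. (norm x)\<^sup>2 * (norm (v w))\<^sup>2"])
  show "integrable M (\<lambda>w. (norm x)\<^sup>2 * (norm (v w))\<^sup>2)" using assms by simp
  show "(\<lambda>w. (x \<bullet> v w)\<^sup>2) \<in> borel_measurable M" using assms(1) by simp
  show "AE w in M. norm ((x \<bullet> v w)\<^sup>2) \<le> norm ((norm x)\<^sup>2 * (norm (v w))\<^sup>2)"
    by (intro AE_I2) (simp add: inner_square_le)
qed

lemma integral_inner_square_le:
  fixes v :: "'w \<Rightarrow> 'a::{real_inner, second_countable_topology}"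
  assumes "v \<in> borel_measurable M" "integrable M (\<lambda>w. (norm (v w))\<^sup>2)"
  shows "(\<integral>w. (x \<bullet> v w)\<^sup>2 \<partial>M) \<le> (norm x)\<^sup>2 * (\<integral>w. (norm (v w))\<^sup>2 \<partial>M)"
proof -
  have "(\<integral>w. (x \<bullet> v w)\<^sup>2 \<partial>M) \<le> (\<integral>w. (norm x)\<^sup>2 * (norm (v w))\<^sup>2 \<partial>M)"
    using assms square_integrable_inner[OF assms] inner_square_le
    by (intro integral_mono) simp_all
  then show ?thesis by simp
qed

lemma integrable_inner_mult:
  fixes a b :: "'w \<Rightarrow> 'a::{real_inner, second_countable_topology}"
  assumes "a \<in> borel_measurable M" "b \<in> borel_measurable M"
    and "integrable M (\<lambda>w. (norm (a w))\<^sup>2)" "integrable M (\<lambda>w. (norm (b w))\<^sup>2)"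
  shows "integrable M (\<lambda>w. (x \<bullet> a w) * (y \<bullet> b w))"
  using assms square_integrable_inner[OF assms(1,3)] square_integrable_inner[OF assms(2,4)]
  by (intro integrable_mult_if_square_integrable) simp_all

lemma abs_integral_inner_mult_le_sqrt:
  fixes a b :: "'w \<Rightarrow> 'a::{real_inner, second_countable_topology}"
  assumes "a \<in> borel_measurable M" "b \<in> borel_measurable M"
    and "integrable M (\<lambda>w. (norm (a w))\<^sup>2)" "integrable M (\<lambda>w. (norm (b w))\<^sup>2)"
  shows "\<bar>\<integral>w. (x \<bullet> a w) * (y \<bullet> b w) \<partial>M\<bar>
    \<le> sqrt (\<integral>w. (x \<bullet> a w)\<^sup>2 \<partial>M) * sqrt (\<integral>w. (y \<bullet> b w)\<^sup>2 \<partial>M)"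
  using assms square_integrable_inner[OF assms(1,3)] square_integrable_inner[OF assms(2,4)]
  by (intro abs_integral_mult_le_sqrt) simp_all

lemma inner_second_moment_mult_vec:
  fixes v :: "'w \<Rightarrow> real^'n"
  assumes "v \<in> borel_measurable M" "integrable M (\<lambda>w. (norm (v w))\<^sup>2)"
  shows "x \<bullet> (second_moment M v *v y) = (\<integral>w. (x \<bullet> v w) * (y \<bullet> v w) \<partial>M)"
proof -
  have entry: "integrable M (\<lambda>w. v w $ i * v w $ j)" for i j
    using integrable_inner_mult[OF assms(1,1,2,2), of "axis i 1" "axis j 1"]
    by (simp add: inner_axis')
  have "x \<bullet> (second_moment M v *v y) =
      (\<Sum>i\<in>UNIV. \<Sum>j\<in>UNIV. (\<integral>w. x $ i * y $ j * (v w $ i * v w $ j) \<partial>M))"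
    by (simp add: inner_vec_def matrix_vector_mult_def second_moment_def sum_distrib_left
        algebra_simps)
  also have "\<dots> = (\<integral>w. (\<Sum>i\<in>UNIV. \<Sum>j\<in>UNIV. x $ i * y $ j * (v w $ i * v w $ j)) \<partial>M)"
    by (simp add: entry integrable_sum Bochner_Integration.integral_sum)
  also have "\<dots> = (\<integral>w. (x \<bullet> v w) * (y \<bullet> v w) \<partial>M)"
    by (simp add: inner_vec_def sum_product algebra_simps)
  finally show ?thesis .
qed

lemma mat_trace_second_moment:
  fixes v :: "'w \<Rightarrow> real^'n"
  assumes "v \<in> borel_measurable M" "integrable M (\<lambda>w. (norm (v w))\<^sup>2)"
  shows "mat_trace (second_moment M v) = (\<integral>w. (norm (v w))\<^sup>2 \<partial>M)"
proof -
  have diagonal: "integrable M (\<lambda>w. v w $ i * v w $ i)" for i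
    using integrable_inner_mult[OF assms(1,1,2,2), of "axis i 1" "axis i 1"]
    by (simp add: inner_axis')
  have "mat_trace (second_moment M v) = (\<integral>w. (\<Sum>i\<in>UNIV. v w $ i * v w $ i) \<partial>M)"
    unfolding mat_trace_def second_moment_def
    by (simp add: diagonal Bochner_Integration.integral_sum)
  also have "\<dots> = (\<integral>w. (norm (v w))\<^sup>2 \<partial>M)"
    by (simp add: power2_norm_eq_inner inner_vec_def)
  finally show ?thesis .
qed

lemma spec_norm_pos:
  fixes A :: "real^'n^'m"
  assumes "A \<noteq> 0"
  shows "0 < spec_norm A"
proof -
  have "\<exists>x. A *v x \<noteq> 0" using assms by (metis matrix_eq matrix_vector_mult_0)
  then show ?thesis unfolding spec_norm_def by (subst onorm_pos_lt) auto
qed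

lemma spec_norm_le_if_bilinear_bound:
  fixes A :: "real^'n^'m"
  assumes "0 \<le> c" and bound: "\<And>x y. \<bar>x \<bullet> (A *v y)\<bar> \<le> c * norm x * norm y"
  shows "spec_norm A \<le> c"
  unfolding spec_norm_def
proof (rule onorm_le)
  fix y
  have "(norm (A *v y))\<^sup>2 = (A *v y) \<bullet> (A *v y)" by (rule power2_norm_eq_inner)
  also have "\<dots> \<le> norm (A *v y) * (c * norm y)" using bound[of "A *v y" y] by (simp add: algebra_simps)
  finally have "norm (A *v y) * norm (A *v y) \<le> norm (A *v y) * (c * norm y)"
    by (simp add: power2_eq_square)
  then show "norm (A *v y) \<le> c * norm y"
    using \<open>0 \<le> c\<close> by (cases "A *v y = 0") auto
qed

lemma integral_inner_square_le_spec_norm: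
  fixes v :: "'w \<Rightarrow> real^'n"
  assumes "v \<in> borel_measurable M" "integrable M (\<lambda>w. (norm (v w))\<^sup>2)"
  shows "(\<integral>w. (y \<bullet> v w)\<^sup>2 \<partial>M) \<le> spec_norm (second_moment M v) * (norm y)\<^sup>2"
proof -
  have "(\<integral>w. (y \<bullet> v w)\<^sup>2 \<partial>M) = y \<bullet> (second_moment M v *v y)"
    by (simp add: inner_second_moment_mult_vec[OF assms] power2_eq_square)
  also have "\<dots> \<le> norm y * norm (second_moment M v *v y)" by (rule norm_cauchy_schwarz)
  also have "\<dots> \<le> norm y * (spec_norm (second_moment M v) * norm y)"
    unfolding spec_norm_def by (intro mult_left_mono onorm) simp_all
  finally show ?thesis by (simp add: power2_eq_square algebra_simps)
qed

lemma spec_norm_second_moment_le_mat_trace: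
  fixes v :: "'w \<Rightarrow> real^'n"
  assumes "v \<in> borel_measurable M" "integrable M (\<lambda>w. (norm (v w))\<^sup>2)"
  shows "spec_norm (second_moment M v) \<le> mat_trace (second_moment M v)"
proof -
  define S where "S = (\<integral>w. (norm (v w))\<^sup>2 \<partial>M)"
  have "spec_norm (second_moment M v) \<le> S"
  proof (rule spec_norm_le_if_bilinear_bound)
    show "0 \<le> S" unfolding S_def by simp
    fix x y :: "real^'n"
    have "\<bar>x \<bullet> (second_moment M v *v y)\<bar>
        \<le> sqrt (\<integral>w. (x \<bullet> v w)\<^sup>2 \<partial>M) * sqrt (\<integral>w. (y \<bullet> v w)\<^sup>2 \<partial>M)"
      unfolding inner_second_moment_mult_vec[OF assms]
      by (rule abs_integral_inner_mult_le_sqrt[OF assms(1,1,2,2)])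
    also have "\<dots> \<le> sqrt ((norm x)\<^sup>2 * S) * sqrt ((norm y)\<^sup>2 * S)"
      unfolding S_def
      by (intro mult_mono real_sqrt_le_mono integral_inner_square_le[OF assms]) simp_all
    also have "\<dots> = S * norm x * norm y"
      using \<open>0 \<le> S\<close> by (simp add: real_sqrt_mult)
    finally show "\<bar>x \<bullet> (second_moment M v *v y)\<bar> \<le> S * norm x * norm y" .
  qed
  then show ?thesis unfolding S_def mat_trace_second_moment[OF assms] .
qed

lemma inner_second_moment_diff_mult_vec:
  fixes u v :: "'w \<Rightarrow> real^'n"
  assumes "u \<in> borel_measurable M" "v \<in> borel_measurable M"
    and "integrable M (\<lambda>w. (norm (u w))\<^sup>2)" "integrable M (\<lambda>w. (norm (v w))\<^sup>2)"
  defines "e \<equiv> \<lambda>w. u w - v w"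
  shows "x \<bullet> ((second_moment M u - second_moment M v) *v y) =
      (\<integral>w. (x \<bullet> e w) * (y \<bullet> v w) \<partial>M) + (\<integral>w. (x \<bullet> v w) * (y \<bullet> e w) \<partial>M)
      + (\<integral>w. (x \<bullet> e w) * (y \<bullet> e w) \<partial>M)"
proof -
  have e: "e \<in> borel_measurable M" "integrable M (\<lambda>w. (norm (e w))\<^sup>2)"
    unfolding e_def using assms square_integrable_diff by simp_all
  have "(x \<bullet> u w) * (y \<bullet> u w) = (x \<bullet> e w) * (y \<bullet> v w) + (x \<bullet> v w) * (y \<bullet> e w)
      + (x \<bullet> e w) * (y \<bullet> e w) + (x \<bullet> v w) * (y \<bullet> v w)" for w
    by (simp add: e_def inner_diff_right algebra_simps)
  then have "(\<integral>w. (x \<bullet> u w) * (y \<bullet> u w) \<partial>M) =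
      (\<integral>w. (x \<bullet> e w) * (y \<bullet> v w) \<partial>M) + (\<integral>w. (x \<bullet> v w) * (y \<bullet> e w) \<partial>M)
      + (\<integral>w. (x \<bullet> e w) * (y \<bullet> e w) \<partial>M) + (\<integral>w. (x \<bullet> v w) * (y \<bullet> v w) \<partial>M)"
    using integrable_inner_mult[OF e(1) assms(2) e(2) assms(4)]
      integrable_inner_mult[OF assms(2) e(1) assms(4) e(2)]
      integrable_inner_mult[OF e(1) e(1) e(2) e(2)]
      integrable_inner_mult[OF assms(2) assms(2) assms(4) assms(4)]
    by simp
  then show ?thesis
    by (simp add: matrix_vector_mult_diff_rdistrib inner_diff_right
        inner_second_moment_mult_vec[OF assms(1,3)] inner_second_moment_mult_vec[OF assms(2,4)])
qed

lemma spec_norm_second_moment_diff_le: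
  fixes u v :: "'w \<Rightarrow> real^'n"
  assumes "u \<in> borel_measurable M" "v \<in> borel_measurable M"
    and "integrable M (\<lambda>w. (norm (u w))\<^sup>2)" "integrable M (\<lambda>w. (norm (v w))\<^sup>2)"
  defines "L \<equiv> \<integral>w. (norm (u w - v w))\<^sup>2 \<partial>M"
    and "N \<equiv> spec_norm (second_moment M v)"
  shows "spec_norm (second_moment M u - second_moment M v) \<le> 2 * sqrt (L * N) + L"
proof (rule spec_norm_le_if_bilinear_bound)
  define e where "e = (\<lambda>w. u w - v w)"
  have e: "e \<in> borel_measurable M" "integrable M (\<lambda>w. (norm (e w))\<^sup>2)"
    unfolding e_def using assms square_integrable_diff by simp_all
  have L_nonneg: "0 \<le> L" unfolding L_def by simp
  have N_nonneg: "0 \<le> N" unfolding N_def spec_norm_def by (rule onorm_pos_le) simp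
  show "0 \<le> 2 * sqrt (L * N) + L" using L_nonneg N_nonneg by simp
  have e_bound: "sqrt (\<integral>w. (x \<bullet> e w)\<^sup>2 \<partial>M) \<le> norm x * sqrt L" for x
    using real_sqrt_le_mono[OF integral_inner_square_le[OF e, of x]]
    by (simp add: L_def e_def real_sqrt_mult)
  have v_bound: "sqrt (\<integral>w. (x \<bullet> v w)\<^sup>2 \<partial>M) \<le> norm x * sqrt N" for x
    using real_sqrt_le_mono[OF integral_inner_square_le_spec_norm[OF assms(2,4), of x]]
    by (simp add: N_def real_sqrt_mult mult.commute)
  fix x y :: "real^'n"
  have "\<bar>x \<bullet> ((second_moment M u - second_moment M v) *v y)\<bar>
      \<le> \<bar>\<integral>w. (x \<bullet> e w) * (y \<bullet> v w) \<partial>M\<bar> + \<bar>\<integral>w. (x \<bullet> v w) * (y \<bullet> e w) \<partial>M\<bar>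
        + \<bar>\<integral>w. (x \<bullet> e w) * (y \<bullet> e w) \<partial>M\<bar>"
    unfolding inner_second_moment_diff_mult_vec[OF assms(1-4)] e_def by linarith
  also have "\<dots> \<le> (norm x * sqrt L) * (norm y * sqrt N) + (norm x * sqrt N) * (norm y * sqrt L)
      + (norm x * sqrt L) * (norm y * sqrt L)"
    by (intro add_mono order_trans[OF abs_integral_inner_mult_le_sqrt] mult_mono
        e_bound v_bound e assms(2,4)) (simp_all add: L_nonneg N_nonneg)
  also have "\<dots> = (2 * sqrt (L * N) + L) * norm x * norm y"
    using L_nonneg N_nonneg by (simp add: real_sqrt_mult algebra_simps)
  finally show "\<bar>x \<bullet> ((second_moment M u - second_moment M v) *v y)\<bar>
      \<le> (2 * sqrt (L * N) + L) * norm x * norm y" .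
qed

lemma divide_le_of_le_two_sqrt_mult_plus:
  fixes D L N :: real
  assumes "0 < N" "0 \<le> L" "L / N \<le> 0.16" "D \<le> 2 * sqrt (L * N) + L"
  shows "D / N \<le> 2.4 * sqrt (L / N)"
proof -
  define r where "r = sqrt (L / N)"
  have "0 \<le> r" unfolding r_def using assms(1,2) by simp
  have L_eq: "L = r\<^sup>2 * N" unfolding r_def using assms(1,2) by simp
  have "r\<^sup>2 \<le> 0.4\<^sup>2" using assms(3) L_eq assms(1) by (simp add: power2_eq_square)
  then have "r \<le> 0.4" by (rule power2_le_imp_le) simp
  have "sqrt (L * N) = r * N"
    unfolding L_eq using \<open>0 \<le> r\<close> assms(1) by (simp add: power2_eq_square real_sqrt_mult)
  then have "D / N \<le> (2 * r + r\<^sup>2) * N / N"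
    using assms(1,4) L_eq by (simp add: divide_right_mono algebra_simps)
  also have "\<dots> = r * (2 + r)" using assms(1) by (simp add: power2_eq_square field_simps)
  also have "\<dots> \<le> r * 2.4" using \<open>r \<le> 0.4\<close> \<open>0 \<le> r\<close> by (intro mult_left_mono) simp_all
  finally show ?thesis unfolding r_def by simp
qed

theorem mainTheorem2:
  fixes M :: "'w measure"
    and sB :: "'w \<Rightarrow> real^'d"
    and score :: "'w \<Rightarrow> real^'d"
  assumes "prob_space M"
    and "sB \<in> borel_measurable M"
    and "score \<in> borel_measurable M"
    and "integrable M (\<lambda>\<omega>. (norm (sB \<omega>))\<^sup>2)"
    and "integrable M (\<lambda>\<omega>. (norm (score \<omega>))\<^sup>2)"
    and "second_moment M score \<noteq> 0"
    and "intdim (second_moment M score) *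
           ((\<integral>\<omega>. (norm (sB \<omega> - score \<omega>))\<^sup>2 \<partial>M) / mat_trace (second_moment M score))
         \<le> 0.16"
  shows "spec_norm (second_moment M sB - second_moment M score) / spec_norm (second_moment M score)
         \<le> 2.4 * sqrt (intdim (second_moment M score) *
              ((\<integral>\<omega>. (norm (sB \<omega> - score \<omega>))\<^sup>2 \<partial>M) / mat_trace (second_moment M score)))"
proof -
  define F where "F = second_moment M score"
  define L where "L = (\<integral>\<omega>. (norm (sB \<omega> - score \<omega>))\<^sup>2 \<partial>M)"
  have N_pos: "0 < spec_norm F" unfolding F_def using assms(6) by (rule spec_norm_pos)
  have "spec_norm F \<le> mat_trace F"
    unfolding F_def using assms(3,5) by (rule spec_norm_second_moment_le_mat_trace)
  with N_pos have ratio: "intdim F * (L / mat_trace F) = L / spec_norm F"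
    unfolding intdim_def by simp
  have bound: "spec_norm (second_moment M sB - F) \<le> 2 * sqrt (L * spec_norm F) + L"
    unfolding F_def L_def using assms(2-5) by (rule spec_norm_second_moment_diff_le)
  have "0 \<le> L" unfolding L_def by simp
  moreover have "L / spec_norm F \<le> 0.16"
    using assms(7) unfolding F_def[symmetric] L_def[symmetric] ratio .
  ultimately show ?thesis
    using divide_le_of_le_two_sqrt_mult_plus[OF N_pos _ _ bound]
    unfolding F_def[symmetric] L_def[symmetric] ratio by simp
qed

end
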